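(* Assume the standing setup below (with $t_{\min}$ the known initial moment) and fix $\hat x\in\mathbb S^2$. (i) For every $y\in K_D^{(\hat x)}$ there exists $\epsilon_0=\epsilon_0(y)>0$ such that $\phi^{(\hat x)}_{y,\eta,\epsilon}\in\mathrm{Range}(L_D^{(\hat x)})$ for all $\epsilon\in(0,\epsilon_0)$ and all $\eta\in(t_{\min},t_{\max}]$. (ii) Let $\eta\in(t_{\min},t_{\max}]$. If $y\notin\overline{K_{D,\eta}^{(\hat x)}}$, then $\phi^{(\hat x)}_{y,\eta,\epsilon}\notin\mathrm{Range}(L_D^{(\hat x)})$ for all $\epsilon>0$.
   Context: Standing setup. $D\subset\mathbb R^3$ is a bounded Lipschitz domain (open and connected) with $\mathbb R^3\setminus\overline D$ connected. $0\le t_{\min}<t_{\max}$, and $S\in C([t_{\min},t_{\max}];L^\infty(D))$ is real-valued with $S(x,t)\ge c_0>0$ for a.e. $x\in D$ and all $t\in[t_{\min},t_{\max}]$. Let $0\le k_{\min}<k_{\max}$, $K=(k_{\max}-k_{\min})/2$. Set $X_D=L^2(D\times(t_{\min},t_{\max}))$ and define $L_D^{(\hat x)}:X_D\to L^2(0,K)$ by $(L_D^{(\hat x)}u)(\tau)=\int_{t_{\min}}^{t_{\max}}\int_D e^{{\rm i}\tau(t-\hat x\cdot y)}u(y,t)\,dy\,dt$, $\tau\in[0,K]$. For $\hat x\in\mathbb S^2$ write $\hat x\cdot D=\{\hat x\cdot y:y\in D\}$. For $y\in\mathbb R^3$, $\epsilon>0$, $\eta>t_{\min}$, the test function $\phi^{(\hat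 x)}_{y,\eta,\epsilon}\in L^2(0,K)$ is $\phi^{(\hat x)}_{y,\eta,\epsilon}(k)=\frac{1}{(\eta-t_{\min})|B_\epsilon(y)|}\int_{t_{\min}}^{\eta}\int_{B_\epsilon(y)}e^{{\rm i}k(t-\hat x\cdot z)}\,dz\,dt$, $k\in[0,K]$, where $B_\epsilon(y)$ is the open ball of radius $\epsilon$ centered at $y$ and $|B_\epsilon(y)|$ its volume. The strips are $K_D^{(\hat x)}=\{y\in\mathbb R^3:\inf(\hat x\cdot D)<\hat x\cdot y<\sup(\hat x\cdot D)\}$ and $K_{D,\eta}^{(\hat x)}=\{y\in\mathbb R^3:\inf(\hat x\cdot D)-t_{\max}+\eta<\hat x\cdot y<\sup(\hat x\cdot D)\}$. *)

theory Defs
  imports "HOL-Analysis.Analysis"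
begin

text \<open>Bounded Lipschitz domain in R^3: bounded, open, connected, and near every
boundary point p, in some local orthonormal frame (direction e), D coincides with
the region strictly below the graph of a Lipschitz function of the coordinates
orthogonal to e.\<close>
definition lipschitz_domain :: "(real^3) set \<Rightarrow> bool" where
  "lipschitz_domain D \<longleftrightarrow> open D \<and> connected D \<and> D \<noteq> {} \<and>
     (\<forall>p\<in>frontier D. \<exists>r>0. \<exists>e::real^3. \<exists>g::real^3 \<Rightarrow> real. \<exists>L\<ge>0.
        norm e = 1 \<and> L-lipschitz_on UNIV g \<and>
        (\<forall>x. g x = g (x - (x \<bullet> e) *\<^sub>R e)) \<and>
        D \<inter> ball p r = {x \<in> ball p r. x \<bullet> e < g x})"

definition L2_on :: "'a::euclidean_space set \<Rightarrow> ('a \<Rightarrow> complex) \<Rightarrow> bool" where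
  "L2_on A u \<longleftrightarrow> set_borel_measurable lebesgue A u \<and>
     set_integrable lebesgue A (\<lambda>x. (cmod (u x))\<^sup>2)"

definition L_op :: "(real^3) set \<Rightarrow> real \<Rightarrow> real \<Rightarrow> real^3 \<Rightarrow> ((real^3) \<times> real \<Rightarrow> complex) \<Rightarrow> real \<Rightarrow> complex" where
  "L_op D tmin tmax xh u \<tau> =
     set_lebesgue_integral lebesgue (D \<times> {tmin<..<tmax})
       (\<lambda>(y,t). exp (\<i> * complex_of_real (\<tau> * (t - xh \<bullet> y))) * u (y,t))"

definition in_range_L :: "(real^3) set \<Rightarrow> real \<Rightarrow> real \<Rightarrow> real \<Rightarrow> real^3 \<Rightarrow> (real \<Rightarrow> complex) \<Rightarrow> bool" where
  "in_range_L D tmin tmax K xh \<phi> \<longleftrightarrow>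
     (\<exists>u. L2_on (D \<times> {tmin<..<tmax}) u \<and>
          (AE \<tau> in lebesgue. \<tau> \<in> {0..K} \<longrightarrow> \<phi> \<tau> = L_op D tmin tmax xh u \<tau>))"

definition phi_test :: "real \<Rightarrow> real^3 \<Rightarrow> real^3 \<Rightarrow> real \<Rightarrow> real \<Rightarrow> real \<Rightarrow> complex" where
  "phi_test tmin xh y \<eta> \<epsilon> k =
     complex_of_real (1 / ((\<eta> - tmin) * measure lebesgue (ball y \<epsilon>))) *
     set_lebesgue_integral lebesgue (ball y \<epsilon> \<times> {tmin..\<eta>})
       (\<lambda>(z,t). exp (\<i> * complex_of_real (k * (t - xh \<bullet> z))))"

definition strip_K :: "(real^3) set \<Rightarrow> real^3 \<Rightarrow> (real^3) set" where
  "strip_K D xh = {y. Inf ((\<lambda>z. xh \<bullet> z) ` D) < xh \<bullet> y \<and> xh \<bullet> y < Sup ((\<lambda>z. xh \<bullet> z) ` D)}"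

definition strip_K_eta :: "(real^3) set \<Rightarrow> real \<Rightarrow> real \<Rightarrow> real^3 \<Rightarrow> (real^3) set" where
  "strip_K_eta D tmax \<eta> xh =
     {y. Inf ((\<lambda>z. xh \<bullet> z) ` D) - tmax + \<eta> < xh \<bullet> y \<and> xh \<bullet> y < Sup ((\<lambda>z. xh \<bullet> z) ` D)}"

end

theory Submission
  imports Defs "HOL-Complex_Analysis.Complex_Analysis"
begin

text \<open>Both \<open>L_D u\<close> and the test function are Fourier-Laplace transforms
\<open>\<zeta> \<mapsto> \<integral> exp (\<i> \<zeta> s(p)) w(p) dp\<close> of integrable densities \<open>w\<close> with bounded support,
in the phase \<open>s(z,t) = t - xh \<bullet> z\<close>; hence they are restrictions of entire functions.

(i) If \<open>y\<close> lies in the strip, the hyperplane \<open>xh \<bullet> z = xh \<bullet> y\<close> meets the connected set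
\<open>D\<close> at some \<open>z\<close>. Translating \<open>B\<^sub>\<epsilon>(y)\<close> to \<open>B\<^sub>\<epsilon>(z) \<subseteq> D\<close> along the hyperplane does not change
the test function, so the normalised indicator of \<open>B\<^sub>\<epsilon>(z) \<times> (tmin,\<eta>)\<close> is a preimage.

(ii) If \<open>L_D u\<close> agrees with the test function a.e. on \<open>[0,K]\<close>, the two entire functions
agree everywhere, in particular on the imaginary axis, where they become Laplace
transforms. Off the closed strip the support of the test function contains a box on which
the phase exceeds (or stays below) the phase range of \<open>D \<times> (tmin,tmax)\<close> by a margin, so
one Laplace transform grows exponentially faster than the other.\<close>

definition fourier_laplace :: "'a measure \<Rightarrow> ('a \<Rightarrow> real) \<Rightarrow> ('a \<Rightarrow> complex) \<Rightarrow> complex \<Rightarrow> complex" where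
  "fourier_laplace M s w z = (\<integral>p. exp (\<i> * z * of_real (s p)) * w p \<partial>M)"

lemma fourier_laplace_uminus:
  "fourier_laplace M (\<lambda>p. - s p) w z = fourier_laplace M s w (- z)"
  by (simp add: fourier_laplace_def)

lemma fourier_laplace_imaginary:
  "fourier_laplace M s w (- (\<i> * of_real \<sigma>)) = (\<integral>p. exp (of_real (\<sigma> * s p)) * w p \<partial>M)"
  by (simp add: fourier_laplace_def mult.assoc)

lemma norm_exp_series_term_le:
  assumes "w \<noteq> 0 \<Longrightarrow> \<bar>s\<bar> \<le> R"
  shows "norm ((\<i> * z * of_real s)^n / fact n * w) \<le> (cmod z * R)^n / fact n * cmod w"
proof (cases "w = 0")
  case False
  then have "(cmod z * \<bar>s\<bar>)^n \<le> (cmod z * R)^n"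
    using assms by (intro power_mono mult_left_mono) auto
  then show ?thesis
    by (simp add: norm_mult norm_divide norm_power mult_right_mono divide_right_mono)
qed simp

lemma fourier_laplace_sums:
  fixes M :: "'a measure" and w :: "'a \<Rightarrow> complex" and s :: "'a \<Rightarrow> real"
  assumes w: "integrable M w" and s[measurable]: "s \<in> borel_measurable M"
    and R: "\<And>p. w p \<noteq> 0 \<Longrightarrow> \<bar>s p\<bar> \<le> R"
  shows "(\<lambda>n. (\<integral>p. (\<i> * of_real (s p))^n / fact n * w p \<partial>M) * z^n) sums fourier_laplace M s w z"
proof -
  have [measurable]: "w \<in> borel_measurable M" using w by auto
  define f where "f n p = (\<i> * z * of_real (s p))^n / fact n * w p" for n p
  have f_le: "norm (f n p) \<le> (cmod z * R)^n / fact n * cmod (w p)" for n p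
    unfolding f_def using R by (rule norm_exp_series_term_le)
  have exp_series: "summable (\<lambda>n. x^n / fact n * a)" for x a :: real
    using summable_exp[of x] by (intro summable_mult2) (simp add: divide_inverse mult.commute)
  have majorant: "integrable M (\<lambda>p. (cmod z * R)^n / fact n * cmod (w p))" for n
    using w by (intro integrable_mult_right integrable_norm)
  have int_f: "integrable M (f n)" for n
  proof (rule Bochner_Integration.integrable_bound[OF majorant])
    show "f n \<in> borel_measurable M" unfolding f_def by measurable
    show "AE p in M. norm (f n p) \<le> norm ((cmod z * R)^n / fact n * cmod (w p))"
      by (intro AE_I2 order_trans[OF f_le]) (simp add: divide_right_mono)
  qed
  have "summable (\<lambda>n. \<integral>p. norm (f n p) \<partial>M)"
  proof (rule summable_comparison_test[OF _ exp_series])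
    have "norm (\<integral>p. norm (f n p) \<partial>M) = (\<integral>p. norm (f n p) \<partial>M)" for n
      by (simp add: integral_nonneg_AE)
    also have "\<dots> n \<le> (\<integral>p. (cmod z * R)^n / fact n * cmod (w p) \<partial>M)" for n
      using int_f majorant f_le by (intro integral_mono) auto
    finally show "\<exists>N. \<forall>n\<ge>N. norm (\<integral>p. norm (f n p) \<partial>M) \<le> (cmod z * R)^n / fact n * (\<integral>p. cmod (w p) \<partial>M)"
      by simp
  qed
  moreover have "summable (\<lambda>n. norm (f n p))" for p
    by (rule summable_comparison_test[OF _ exp_series, of _ "cmod z * R" "cmod (w p)"])
      (use f_le in simp)
  ultimately have sums: "(\<lambda>n. integral\<^sup>L M (f n)) sums (\<integral>p. (\<Sum>n. f n p) \<partial>M)"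
    by (intro sums_integral[OF int_f] AE_I2)
  have sum_f: "(\<Sum>n. f n p) = exp (\<i> * z * of_real (s p)) * w p" for p
  proof -
    have "(\<lambda>n. (\<i> * z * of_real (s p))^n /\<^sub>R fact n * w p) sums (exp (\<i> * z * of_real (s p)) * w p)"
      by (intro sums_mult2 exp_converges)
    then show ?thesis
      unfolding f_def by (simp add: sums_iff scaleR_conv_of_real divide_inverse mult.commute)
  qed
  have integral_f: "integral\<^sup>L M (f n) = (\<integral>p. (\<i> * of_real (s p))^n / fact n * w p \<partial>M) * z^n" for n
  proof -
    have "f n = (\<lambda>p. z^n * ((\<i> * of_real (s p))^n / fact n * w p))"
      by (auto simp: f_def power_mult_distrib fun_eq_iff)
    then show ?thesis by (simp add: mult.commute)
  qed
  show ?thesis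
    using sums unfolding sum_f integral_f fourier_laplace_def .
qed

lemma holomorphic_fourier_laplace:
  assumes "integrable M w" "s \<in> borel_measurable M" "\<And>p. w p \<noteq> 0 \<Longrightarrow> \<bar>s p\<bar> \<le> R"
  shows "fourier_laplace M s w holomorphic_on UNIV"
proof -
  define c where "c n = (\<integral>p. (\<i> * of_real (s p))^n / fact n * w p \<partial>M)" for n
  have sums: "(\<lambda>n. c n * z^n) sums fourier_laplace M s w z" for z
    unfolding c_def by (rule fourier_laplace_sums[OF assms])
  then have power_series: "fourier_laplace M s w = (\<lambda>z. \<Sum>n. c n * z^n)"
    by (auto simp: sums_iff fun_eq_iff)
  have "summable (\<lambda>n. c n * z^n)" for z
    using sums sums_summable by blast
  then have "((\<lambda>z. \<Sum>n. c n * z^n) has_field_derivative (\<Sum>n. diffs c n * x^n)) (at x)" for x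
    by (rule termdiffs_strong_converges_everywhere)
  then show ?thesis
    unfolding power_series using holomorphic_on_open open_UNIV by blast
qed

lemma entire_eq_if_AE_eq_on_interval:
  assumes f: "f holomorphic_on UNIV" and g: "g holomorphic_on UNIV" and K: "0 < K"
    and eq: "AE \<tau> in lebesgue. \<tau> \<in> {0..K} \<longrightarrow> f (of_real \<tau>) = g (of_real \<tau>)"
  shows "f = g"
proof -
  define h where "h z = f z - g z" for z
  have h: "h holomorphic_on UNIV" unfolding h_def using f g by (rule holomorphic_on_diff)
  have "continuous_on UNIV (\<lambda>\<tau>::real. h (of_real \<tau>))"
    by (rule continuous_on_compose2[OF holomorphic_on_imp_continuous_on[OF h]])
      (auto intro: continuous_intros)
  then have closed: "closed {\<tau>::real. h (of_real \<tau>) = 0}"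
    by (rule closed_Collect_eq) (rule continuous_on_const)
  have AE: "AE \<tau> \<in> {0<..<K} in lebesgue. \<tau> \<in> {\<tau>. h (of_real \<tau>) = 0}"
    using eq by eventually_elim (auto simp: h_def)
  have zero: "h (of_real \<tau>) = 0" if "\<tau> \<in> {0<..<K}" for \<tau>
    using mem_closed_if_AE_lebesgue_open[OF open_greaterThanLessThan closed AE that] by simp
  have "of_real 0 islimpt (of_real ` {0<..<K} :: complex set)"
    using K by (intro islimpt_isCont_image islimpt_greaterThanLessThan1)
      (auto simp: eventually_at_filter)
  then have "h z = 0" for z
    by (rule analytic_continuation[OF h open_UNIV connected_UNIV subset_UNIV UNIV_I])
      (auto simp: zero)
  then show ?thesis by (auto simp: h_def fun_eq_iff)
qed

lemma emeasure_lebesgue_open_pos: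
  fixes S :: "'a::euclidean_space set"
  assumes "open S" "x \<in> S"
  shows "0 < emeasure lebesgue S"
proof -
  obtain a b where box: "x \<in> box a b" "box a b \<subseteq> S"
    using assms by (metis openE rational_boxes order_trans)
  then have "0 < emeasure lebesgue (box a b)"
    by (auto simp: emeasure_lborel_box_eq mem_box algebra_simps intro!: prod_pos)
  also have "\<dots> \<le> emeasure lebesgue S"
    using assms box by (auto intro!: emeasure_mono)
  finally show ?thesis .
qed

lemma exp_faster_growth_not_dominated:
  fixes M N T \<delta> :: real
  assumes M: "0 < M" and \<delta>: "0 < \<delta>"
    and bound: "\<And>\<sigma>. 0 \<le> \<sigma> \<Longrightarrow> M * exp (\<sigma> * (T + \<delta>)) \<le> exp (\<sigma> * T) * N"
  shows False
proof -
  define \<sigma> where "\<sigma> = (\<bar>N\<bar> / M + 1) / \<delta>"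
  have \<sigma>: "0 \<le> \<sigma>" using M \<delta> by (simp add: \<sigma>_def)
  have "M * (1 + \<sigma> * \<delta>) \<le> M * exp (\<sigma> * \<delta>)"
    using M by (intro mult_left_mono) (auto simp: add.commute)
  also have "\<dots> \<le> N"
    using bound[OF \<sigma>] by (simp add: distrib_left exp_add mult_ac)
  moreover have "M * (1 + \<sigma> * \<delta>) = 2 * M + \<bar>N\<bar>"
    using M \<delta> by (simp add: \<sigma>_def field_simps)
  ultimately show False
    using M by linarith
qed

lemma norm_exp_weighted_integral_le:
  fixes w :: "'a \<Rightarrow> complex"
  assumes w: "integrable M w" and s[measurable]: "s \<in> borel_measurable M"
    and T: "\<And>p. w p \<noteq> 0 \<Longrightarrow> s p \<le> T" and \<sigma>: "0 \<le> \<sigma>"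
  shows "norm (\<integral>p. exp (of_real (\<sigma> * s p)) * w p \<partial>M) \<le> exp (\<sigma> * T) * (\<integral>p. cmod (w p) \<partial>M)"
proof -
  have [measurable]: "w \<in> borel_measurable M" using w by auto
  have pointwise: "norm (exp (of_real (\<sigma> * s p)) * w p) \<le> exp (\<sigma> * T) * cmod (w p)" for p
  proof (cases "w p = 0")
    case False
    then have "\<sigma> * s p \<le> \<sigma> * T" using T \<sigma> by (simp add: mult_left_mono)
    then show ?thesis by (simp add: norm_mult mult_right_mono flip: exp_of_real)
  qed simp
  have majorant: "integrable M (\<lambda>p. exp (\<sigma> * T) * cmod (w p))"
    using w by (intro integrable_mult_right integrable_norm)
  have "integrable M (\<lambda>p. norm (exp (of_real (\<sigma> * s p)) * w p))"
  proof (rule Bochner_Integration.integrable_bound[OF majorant])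
    show "AE p in M. norm (norm (exp (of_real (\<sigma> * s p)) * w p)) \<le> norm (exp (\<sigma> * T) * cmod (w p))"
      using pointwise by (intro AE_I2) simp
  qed measurable
  then have "(\<integral>p. norm (exp (of_real (\<sigma> * s p)) * w p) \<partial>M) \<le> (\<integral>p. exp (\<sigma> * T) * cmod (w p) \<partial>M)"
    using majorant pointwise by (rule integral_mono)
  then show ?thesis
    by (intro order_trans[OF integral_norm_bound]) simp
qed

lemma exp_weighted_indicator_integral_ge:
  assumes B[measurable]: "B \<in> sets M" and B_fin: "emeasure M B < \<infinity>"
    and s[measurable]: "s \<in> borel_measurable M" and R: "\<And>p. p \<in> B \<Longrightarrow> \<bar>s p\<bar> \<le> R"
    and U[measurable]: "U \<in> sets M" and UB: "U \<subseteq> B" and T: "\<And>p. p \<in> U \<Longrightarrow> T \<le> s p"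
    and \<sigma>: "0 \<le> \<sigma>"
  shows "measure M U * exp (\<sigma> * T) \<le> (\<integral>p. exp (\<sigma> * s p) * indicator B p \<partial>M)"
proof -
  have U_fin: "emeasure M U < \<infinity>"
    using emeasure_mono[OF UB B] B_fin by simp
  have "integrable M (\<lambda>p. exp (\<sigma> * s p) * indicator B p)"
  proof (rule Bochner_Integration.integrable_bound)
    show "integrable M (\<lambda>p. exp (\<sigma> * R) * indicator B p)"
      using B_fin by (intro integrable_mult_right integrable_real_indicator) auto
    have "\<sigma> * s p \<le> \<sigma> * R" if "p \<in> B" for p
      using R[OF that] \<sigma> by (intro mult_left_mono) auto
    then show "AE p in M. norm (exp (\<sigma> * s p) * indicator B p) \<le> norm (exp (\<sigma> * R) * indicator B p :: real)"
      by (intro AE_I2) (simp add: indicator_def)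
  qed simp
  moreover have "integrable M (\<lambda>p. exp (\<sigma> * T) * indicator U p :: real)"
    using U_fin by (intro integrable_mult_right integrable_real_indicator) auto
  moreover have "exp (\<sigma> * T) * indicator U p \<le> exp (\<sigma> * s p) * indicator B p" for p
    using UB T \<sigma> by (auto simp: indicator_def mult_left_mono)
  ultimately have "(\<integral>p. exp (\<sigma> * T) * indicator U p \<partial>M) \<le> (\<integral>p. exp (\<sigma> * s p) * indicator B p \<partial>M)"
    by (intro integral_mono)
  then show ?thesis
    using U_fin by (simp add: measure_def mult.commute)
qed

lemma fourier_laplace_ne_if_support_beyond:
  fixes w :: "'a::euclidean_space \<Rightarrow> complex"
  assumes w: "integrable lebesgue w" and s[measurable]: "s \<in> borel_measurable lebesgue"
    and w_supp: "\<And>p. w p \<noteq> 0 \<Longrightarrow> s p \<le> T"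
    and B[measurable]: "B \<in> sets lebesgue" and B_fin: "emeasure lebesgue B < \<infinity>"
    and R: "\<And>p. p \<in> B \<Longrightarrow> \<bar>s p\<bar> \<le> R"
    and U: "open U" "x \<in> U" "U \<subseteq> B" and \<delta>: "0 < \<delta>" and U_beyond: "\<And>p. p \<in> U \<Longrightarrow> T + \<delta> \<le> s p"
    and c: "0 < c"
  shows "fourier_laplace lebesgue s w \<noteq> fourier_laplace lebesgue s (\<lambda>p. of_real (c * indicator B p))"
proof
  assume eq: "fourier_laplace lebesgue s w = fourier_laplace lebesgue s (\<lambda>p. of_real (c * indicator B p))"
  have U_meas[measurable]: "U \<in> sets lebesgue"
    using U by (simp add: borel_open sets_completionI_sets)
  have "emeasure lebesgue U < \<infinity>"
    using emeasure_mono[OF U(3) B] B_fin by simp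
  then have U_pos: "0 < measure lebesgue U"
    using emeasure_lebesgue_open_pos[OF U(1,2)] by (simp add: measure_def enn2real_positive_iff)
  \<comment> \<open>On the negative imaginary axis the left transform is \<open>O(exp (\<sigma> T))\<close>, the right one
    is at least \<open>c |U| exp (\<sigma> (T + \<delta>))\<close>.\<close>
  show False
  proof (rule exp_faster_growth_not_dominated)
    fix \<sigma> :: real assume \<sigma>: "0 \<le> \<sigma>"
    define J where "J = (\<integral>p. exp (\<sigma> * s p) * indicator B p \<partial>lebesgue)"
    have "0 \<le> J" unfolding J_def by (intro integral_nonneg_AE) auto
    have "(\<integral>p. exp (of_real (\<sigma> * s p)) * of_real (c * indicator B p) \<partial>lebesgue)
        = (of_real (c * J) :: complex)"
      by (simp add: J_def exp_of_real mult_ac flip: of_real_mult)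
    then have "c * J = norm (\<integral>p. exp (of_real (\<sigma> * s p)) * w p \<partial>lebesgue)"
      using fun_cong[OF eq, of "- (\<i> * of_real \<sigma>)"] c \<open>0 \<le> J\<close>
      by (simp add: fourier_laplace_imaginary norm_mult)
    also have "\<dots> \<le> exp (\<sigma> * T) * (\<integral>p. cmod (w p) \<partial>lebesgue)"
      by (rule norm_exp_weighted_integral_le[OF w s w_supp \<sigma>])
    finally have "c * J \<le> exp (\<sigma> * T) * (\<integral>p. cmod (w p) \<partial>lebesgue)" .
    moreover have "measure lebesgue U * exp (\<sigma> * (T + \<delta>)) \<le> J"
      unfolding J_def by (rule exp_weighted_indicator_integral_ge[OF B B_fin s R U_meas U(3) U_beyond \<sigma>])
    ultimately show "c * measure lebesgue U * exp (\<sigma> * (T + \<delta>)) \<le> exp (\<sigma> * T) * (\<integral>p. cmod (w p) \<partial>lebesgue)"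
      using c by (smt (verit) mult.assoc mult_left_mono)
  qed (use c U_pos \<delta> in auto)
qed

lemma L2_on_imp_integrable:
  fixes u :: "'a::euclidean_space \<Rightarrow> complex"
  assumes u: "L2_on A u" and A: "A \<in> lmeasurable"
  shows "integrable lebesgue (\<lambda>p. indicator A p *\<^sub>R u p)"
proof (rule Bochner_Integration.integrable_bound)
  have [measurable]: "A \<in> sets lebesgue" and "emeasure lebesgue A < \<infinity>"
    using A by (auto simp: fmeasurable_def)
  then show "integrable lebesgue (\<lambda>p. indicator A p + indicator A p *\<^sub>R (cmod (u p))\<^sup>2)"
    using u unfolding L2_on_def set_integrable_def by (intro Bochner_Integration.integrable_add) auto
  show "(\<lambda>p. indicator A p *\<^sub>R u p) \<in> borel_measurable lebesgue"
    using u unfolding L2_on_def set_borel_measurable_def by simp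
  have "x \<le> 1 + x\<^sup>2" for x :: real
  proof (cases "x \<le> 1")
    case False
    then have "x \<le> x * x" by (simp add: mult_le_cancel_left1)
    then show ?thesis by (simp add: power2_eq_square)
  qed (simp add: add_increasing2)
  then have "norm (indicator A p *\<^sub>R u p) \<le> norm (indicator A p + indicator A p *\<^sub>R (cmod (u p))\<^sup>2 :: real)" for p
    by (simp add: indicator_def)
  then show "AE p in lebesgue. norm (indicator A p *\<^sub>R u p) \<le> norm (indicator A p + indicator A p *\<^sub>R (cmod (u p))\<^sup>2 :: real)"
    by (intro AE_I2)
qed

lemma L2_on_scaled_indicator:
  assumes A: "A \<in> sets lebesgue" and E: "E \<in> lmeasurable" "E \<subseteq> A"
  shows "L2_on A (\<lambda>p. of_real c * indicator E p)"
  unfolding L2_on_def set_borel_measurable_def set_integrable_def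
proof
  have [measurable]: "A \<in> sets lebesgue" "E \<in> sets lebesgue"
    using A E by (auto simp: fmeasurable_def)
  show "(\<lambda>x. indicator A x *\<^sub>R (of_real c * indicator E x :: complex)) \<in> borel_measurable lebesgue"
    by measurable
  have "(\<lambda>x. indicator A x *\<^sub>R (cmod (of_real c * indicator E x))\<^sup>2) = (\<lambda>x. c\<^sup>2 * indicator E x)"
    using E by (auto simp: indicator_def fun_eq_iff norm_mult)
  then show "integrable lebesgue (\<lambda>x. indicator A x *\<^sub>R (cmod (of_real c * indicator E x :: complex))\<^sup>2)"
    using E by (simp add: integrable_mult_right fmeasurable_def)
qed

lemma ball_Times_Icc_lmeasurable: "ball (y::'a::euclidean_space) r \<times> {a..b::real} \<in> lmeasurable"
proof (rule fmeasurableI2)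
  show "cball y r \<times> {a..b} \<in> lmeasurable"
    by (intro lmeasurable_compact compact_Times compact_cball compact_Icc)
  show "ball y r \<times> {a..b} \<in> sets lebesgue"
    by (intro sets_completionI_sets) (simp add: borel_Times borel_open borel_closed)
qed auto

lemma AE_indicator_Times_Icc_eq_Ioo:
  fixes S :: "'a::euclidean_space set" and a b :: real
  shows "AE p in lebesgue. indicator (S \<times> {a..b}) p = (indicator (S \<times> {a<..<b}) p :: real)"
proof (rule AE_I')
  have "((0::'a), (1::real)) \<in> Basis" by (simp add: Basis_prod_def)
  then have "negligible ({p. p \<bullet> (0,1) = a} \<union> {p. p \<bullet> (0,1) = b} :: ('a \<times> real) set)"
    by (intro negligible_Un negligible_standard_hyperplane)
  then show "({p. p \<bullet> (0,1) = a} \<union> {p. p \<bullet> (0,1) = b} :: ('a \<times> real) set) \<in> null_sets lebesgue"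
    by (simp add: negligible_iff_null_sets)
qed (auto simp: indicator_def inner_Pair)

lemma integral_lebesgue_translate:
  fixes f :: "'a::euclidean_space \<Rightarrow> 'b::{banach, second_countable_topology}"
  assumes f[measurable]: "f \<in> borel_measurable borel"
  shows "(\<integral>p. f (v + p) \<partial>lebesgue) = (\<integral>p. f p \<partial>lebesgue)"
proof -
  have "(\<integral>p. f (v + p) \<partial>lebesgue) = (\<integral>p. f (v + p) \<partial>lborel)"
    by (intro integral_completion) measurable
  also have "\<dots> = integral\<^sup>L (distr lborel borel ((+) v)) f"
    by (intro integral_distr[symmetric]) measurable
  also have "\<dots> = (\<integral>p. f p \<partial>lebesgue)"
    by (simp add: lborel_distr_plus integral_completion)
  finally show ?thesis .
qed

lemma unit_inner_near_shift:
  fixes xh :: "'a::real_inner"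
  assumes xh: "norm xh = 1" and a: "dist a (y + d *\<^sub>R xh) < r"
  shows "dist a y < \<bar>d\<bar> + r" "\<bar>xh \<bullet> a - (xh \<bullet> y + d)\<bar> < r"
proof -
  have "dist a y \<le> dist a (y + d *\<^sub>R xh) + dist (y + d *\<^sub>R xh) y" by (rule dist_triangle)
  then show "dist a y < \<bar>d\<bar> + r" using a xh by (simp add: dist_norm)
  have "\<bar>xh \<bullet> (a - (y + d *\<^sub>R xh))\<bar> \<le> norm xh * norm (a - (y + d *\<^sub>R xh))"
    by (rule Cauchy_Schwarz_ineq2)
  moreover have "xh \<bullet> xh = 1" using xh by (simp add: dot_square_norm)
  ultimately show "\<bar>xh \<bullet> a - (xh \<bullet> y + d)\<bar> < r"
    using a xh by (simp add: dist_norm inner_diff_right inner_add_right)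
qed

definition plane_wave_phase :: "'a::real_inner \<Rightarrow> 'a \<times> real \<Rightarrow> real" where
  "plane_wave_phase xh p = snd p - xh \<bullet> fst p"

lemma plane_wave_phase_borel[measurable]:
  "plane_wave_phase (xh::'a::euclidean_space) \<in> borel_measurable borel"
  unfolding plane_wave_phase_def by (intro borel_measurable_continuous_onI continuous_intros)

lemma plane_wave_phase_lebesgue[measurable]:
  "plane_wave_phase (xh::'a::euclidean_space) \<in> borel_measurable lebesgue"
  by (intro measurable_completion) simp

lemma bounded_linear_plane_wave_phase: "bounded_linear (plane_wave_phase xh)"
  unfolding plane_wave_phase_def
  by (intro bounded_linear_sub bounded_linear_snd bounded_linear_compose[OF bounded_linear_inner_right bounded_linear_fst])

lemma plane_wave_phase_on_cylinder:
  fixes D :: "'a::real_inner set"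
  assumes D: "bounded D" and p: "p \<in> D \<times> {tmin<..<tmax}"
  shows "tmin - Sup ((\<lambda>z. xh \<bullet> z) ` D) < plane_wave_phase xh p"
    "plane_wave_phase xh p < tmax - Inf ((\<lambda>z. xh \<bullet> z) ` D)"
proof -
  have "bounded ((\<lambda>z. xh \<bullet> z) ` D)"
    using D by (intro bounded_linear_image bounded_linear_inner_right)
  then have "Inf ((\<lambda>z. xh \<bullet> z) ` D) \<le> xh \<bullet> fst p" "xh \<bullet> fst p \<le> Sup ((\<lambda>z. xh \<bullet> z) ` D)"
    using p by (auto intro!: cInf_lower cSup_upper bounded_imp_bdd_below bounded_imp_bdd_above)
  then show "tmin - Sup ((\<lambda>z. xh \<bullet> z) ` D) < plane_wave_phase xh p"
    "plane_wave_phase xh p < tmax - Inf ((\<lambda>z. xh \<bullet> z) ` D)"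
    using p by (auto simp: plane_wave_phase_def mem_Times_iff)
qed

lemma shifted_box_subset_ball_Times:
  fixes xh :: "'a::real_inner" and tmin t0 t1 \<eta> :: real
  assumes xh: "norm xh = 1" and r: "\<bar>d\<bar> + r \<le> \<epsilon>" and t: "tmin \<le> t0" "t1 \<le> \<eta>"
  shows "ball (y + d *\<^sub>R xh) r \<times> {t0<..<t1} \<subseteq> ball y \<epsilon> \<times> {tmin..\<eta>}"
proof
  fix p assume "p \<in> ball (y + d *\<^sub>R xh) r \<times> {t0<..<t1}"
  then show "p \<in> ball y \<epsilon> \<times> {tmin..\<eta>}"
    using unit_inner_near_shift(1)[OF xh, of "fst p" y d r] r t
    by (auto simp: dist_commute mem_Times_iff)
qed

lemma plane_wave_phase_on_shifted_box:
  fixes xh :: "'a::real_inner"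
  assumes xh: "norm xh = 1" and p: "p \<in> ball (y + d *\<^sub>R xh) r \<times> {t0<..<t1}"
  shows "t0 - xh \<bullet> y - d - r < plane_wave_phase xh p" "plane_wave_phase xh p < t1 - xh \<bullet> y - d + r"
proof -
  have "\<bar>xh \<bullet> fst p - (xh \<bullet> y + d)\<bar> < r" "t0 < snd p" "snd p < t1"
    using p unit_inner_near_shift(2)[OF xh, of "fst p" y d r]
    by (auto simp: dist_commute mem_Times_iff)
  then show "t0 - xh \<bullet> y - d - r < plane_wave_phase xh p" "plane_wave_phase xh p < t1 - xh \<bullet> y - d + r"
    unfolding plane_wave_phase_def abs_less_iff by linarith+
qed

lemma holomorphic_fourier_laplace_plane_wave:
  fixes w :: "'a::euclidean_space \<times> real \<Rightarrow> complex"
  assumes w: "integrable lebesgue w" and supp: "\<And>p. w p \<noteq> 0 \<Longrightarrow> p \<in> A" and A: "bounded A"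
  shows "fourier_laplace lebesgue (plane_wave_phase xh) w holomorphic_on UNIV"
proof -
  have "bounded (plane_wave_phase xh ` A)"
    using A by (rule bounded_linear_image[OF _ bounded_linear_plane_wave_phase])
  then obtain R where "\<forall>x\<in>plane_wave_phase xh ` A. \<bar>x\<bar> \<le> R"
    by (auto simp: bounded_real)
  then show ?thesis
    using supp by (intro holomorphic_fourier_laplace[OF w, of _ R]) auto
qed

lemma L_op_eq_fourier_laplace:
  "L_op D tmin tmax xh u \<tau> =
     fourier_laplace lebesgue (plane_wave_phase xh)
       (\<lambda>p. indicator (D \<times> {tmin<..<tmax}) p *\<^sub>R u p) (of_real \<tau>)"
  unfolding L_op_def fourier_laplace_def set_lebesgue_integral_def plane_wave_phase_def
  by (intro Bochner_Integration.integral_cong refl) (auto split: prod.splits simp: mult_ac)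

lemma phi_test_eq_fourier_laplace:
  "phi_test tmin xh y \<eta> \<epsilon> \<tau> =
     fourier_laplace lebesgue (plane_wave_phase xh)
       (\<lambda>p. of_real (1 / ((\<eta> - tmin) * measure lebesgue (ball y \<epsilon>)) * indicator (ball y \<epsilon> \<times> {tmin..\<eta>}) p))
       (of_real \<tau>)"
proof -
  define c where "c = 1 / ((\<eta> - tmin) * measure lebesgue (ball y \<epsilon>))"
  have "fourier_laplace lebesgue (plane_wave_phase xh) (\<lambda>p. of_real (c * indicator (ball y \<epsilon> \<times> {tmin..\<eta>}) p)) (of_real \<tau>)
      = (\<integral>p. of_real c * (indicator (ball y \<epsilon> \<times> {tmin..\<eta>}) p *\<^sub>R exp (\<i> * of_real \<tau> * of_real (plane_wave_phase xh p))) \<partial>lebesgue)"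
    unfolding fourier_laplace_def
    by (intro Bochner_Integration.integral_cong refl) (auto simp: indicator_def)
  also have "\<dots> = of_real c * (\<integral>p. indicator (ball y \<epsilon> \<times> {tmin..\<eta>}) p *\<^sub>R exp (\<i> * of_real \<tau> * of_real (plane_wave_phase xh p)) \<partial>lebesgue)"
    by (rule integral_mult_right_zero)
  finally show ?thesis
    unfolding phi_test_def set_lebesgue_integral_def c_def plane_wave_phase_def
    by (auto split: prod.splits simp: mult_ac intro!: arg_cong[where f="\<lambda>x. _ * x"] Bochner_Integration.integral_cong)
qed

lemma fourier_laplace_indicator_translate:
  fixes y z xh :: "'a::euclidean_space"
  assumes yz: "xh \<bullet> y = xh \<bullet> z" and T: "T \<in> sets borel"
  shows "fourier_laplace lebesgue (plane_wave_phase xh) (\<lambda>p. of_real (c * indicator (ball y r \<times> T) p)) =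
         fourier_laplace lebesgue (plane_wave_phase xh) (\<lambda>p. of_real (c * indicator (ball z r \<times> T) p))"
proof
  fix \<zeta>
  define f where "f p = exp (\<i> * \<zeta> * of_real (plane_wave_phase xh p)) * of_real (c * indicator (ball y r \<times> T) p)" for p
  have [measurable]: "ball y r \<times> T \<in> sets borel"
    using T by (simp add: borel_Times borel_open)
  have [measurable]: "f \<in> borel_measurable borel"
    unfolding f_def by measurable
  have shift: "f ((y - z, 0) + p) = exp (\<i> * \<zeta> * of_real (plane_wave_phase xh p)) * of_real (c * indicator (ball z r \<times> T) p)" for p
  proof -
    have "dist y (y - z + fst p) = dist z (fst p)" by (simp add: dist_norm algebra_simps)
    moreover have "xh \<bullet> (y - z + fst p) = xh \<bullet> fst p" using yz by (simp add: inner_add_right inner_diff_right)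
    ultimately show ?thesis
      by (simp add: f_def plane_wave_phase_def indicator_def mem_Times_iff)
  qed
  have "fourier_laplace lebesgue (plane_wave_phase xh) (\<lambda>p. of_real (c * indicator (ball y r \<times> T) p)) \<zeta>
      = (\<integral>p. f p \<partial>lebesgue)"
    by (simp add: fourier_laplace_def f_def)
  also have "\<dots> = (\<integral>p. f ((y - z, 0) + p) \<partial>lebesgue)"
    by (rule integral_lebesgue_translate[symmetric]) measurable
  also have "\<dots> = fourier_laplace lebesgue (plane_wave_phase xh) (\<lambda>p. of_real (c * indicator (ball z r \<times> T) p)) \<zeta>"
    by (simp add: fourier_laplace_def shift)
  finally show "fourier_laplace lebesgue (plane_wave_phase xh) (\<lambda>p. of_real (c * indicator (ball y r \<times> T) p)) \<zeta> =
             fourier_laplace lebesgue (plane_wave_phase xh) (\<lambda>p. of_real (c * indicator (ball z r \<times> T) p)) \<zeta>" .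
qed

lemma fourier_laplace_indicator_Icc_eq_Ioo:
  fixes S :: "'a::euclidean_space set" and a b :: real
  assumes S: "S \<in> sets borel" and s[measurable]: "s \<in> borel_measurable lebesgue"
  shows "fourier_laplace lebesgue s (\<lambda>p. of_real (c * indicator (S \<times> {a..b}) p)) =
         fourier_laplace lebesgue s (\<lambda>p. of_real (c * indicator (S \<times> {a<..<b}) p))"
  unfolding fourier_laplace_def
proof (intro ext integral_cong_AE)
  have [measurable]: "S \<times> {a..b} \<in> sets lebesgue" "S \<times> {a<..<b} \<in> sets lebesgue"
    using S by (auto intro!: sets_completionI_sets borel_Times)
  fix \<zeta>
  show "(\<lambda>p. exp (\<i> * \<zeta> * of_real (s p)) * of_real (c * indicator (S \<times> {a..b}) p)) \<in> borel_measurable lebesgue"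
       "(\<lambda>p. exp (\<i> * \<zeta> * of_real (s p)) * of_real (c * indicator (S \<times> {a<..<b}) p)) \<in> borel_measurable lebesgue"
    by measurable
  show "AE p in lebesgue. exp (\<i> * \<zeta> * of_real (s p)) * of_real (c * indicator (S \<times> {a..b}) p) =
                          exp (\<i> * \<zeta> * of_real (s p)) * of_real (c * indicator (S \<times> {a<..<b}) p)"
    using AE_indicator_Times_Icc_eq_Ioo[of S a b] by eventually_elim simp
qed

lemma fourier_laplace_ne_outside_strip:
  fixes D :: "(real^3) set" and xh y :: "real^3" and w :: "(real^3) \<times> real \<Rightarrow> complex"
  assumes w: "integrable lebesgue w" and w_supp: "\<And>p. w p \<noteq> 0 \<Longrightarrow> p \<in> D \<times> {tmin<..<tmax}"
    and D: "bounded D" and xh: "norm xh = 1" and \<eta>: "tmin < \<eta>" and \<epsilon>: "0 < \<epsilon>" and c: "0 < c"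
    and y: "y \<notin> strip_K_eta D tmax \<eta> xh"
  shows "fourier_laplace lebesgue (plane_wave_phase xh) w \<noteq>
         fourier_laplace lebesgue (plane_wave_phase xh) (\<lambda>p. of_real (c * indicator (ball y \<epsilon> \<times> {tmin..\<eta>}) p))"
    (is "fourier_laplace _ ?s _ \<noteq> fourier_laplace _ _ ?w")
proof -
  define I where "I = Inf ((\<lambda>z. xh \<bullet> z) ` D)"
  define Sp where "Sp = Sup ((\<lambda>z. xh \<bullet> z) ` D)"
  let ?B = "ball y \<epsilon> \<times> {tmin..\<eta>}"
  define \<rho> where "\<rho> = min (\<eta> - tmin) (\<epsilon>/8)"
  have \<rho>: "0 < \<rho>" "\<rho> \<le> \<eta> - tmin" "\<rho> \<le> \<epsilon>/8" using \<eta> \<epsilon> by (auto simp: \<rho>_def min_def)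
  have w_phase: "tmin - Sp < ?s p" "?s p < tmax - I" if "w p \<noteq> 0" for p
    unfolding I_def Sp_def using plane_wave_phase_on_cylinder[OF D w_supp[OF that]] by auto
  have B_meas: "?B \<in> sets lebesgue" "emeasure lebesgue ?B < \<infinity>"
    using ball_Times_Icc_lmeasurable by (auto simp: fmeasurable_def)
  have B_phase: "\<bar>?s p\<bar> \<le> \<bar>tmin\<bar> + \<bar>\<eta>\<bar> + \<bar>xh \<bullet> y\<bar> + \<epsilon>" if "p \<in> ?B" for p
    using that unit_inner_near_shift(2)[OF xh, of "fst p" y 0 \<epsilon>]
    by (auto simp: plane_wave_phase_def dist_commute mem_Times_iff)
  \<comment> \<open>In each case, shifting the ball by \<open>\<epsilon>/2\<close> away from \<open>D\<close> along \<open>xh\<close> and taking a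
    short time window at the matching end of \<open>[tmin, \<eta>]\<close> yields the separating box.\<close>
  consider (below) "xh \<bullet> y \<le> I - tmax + \<eta>" | (above) "Sp \<le> xh \<bullet> y"
    using y by (auto simp: strip_K_eta_def I_def Sp_def)
  then show ?thesis
  proof cases
    case below
    let ?U = "ball (y + (-\<epsilon>/2) *\<^sub>R xh) (\<epsilon>/4) \<times> {\<eta>-\<rho><..<\<eta>}"
    show ?thesis
    proof (rule fourier_laplace_ne_if_support_beyond[OF w _ _ B_meas B_phase])
      show "?s p \<le> tmax - I" if "w p \<noteq> 0" for p
        using w_phase[OF that] by simp
      show "open ?U" "(y + (-\<epsilon>/2) *\<^sub>R xh, \<eta> - \<rho>/2) \<in> ?U"
        using \<rho> \<epsilon> by (auto simp: open_Times)
      show "?U \<subseteq> ?B"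
        by (rule shifted_box_subset_ball_Times[OF xh]) (use \<rho> \<epsilon> in auto)
      show "tmax - I + \<epsilon>/8 \<le> ?s p" if "p \<in> ?U" for p
        using plane_wave_phase_on_shifted_box[OF xh that] below \<rho> by auto
    qed (use \<epsilon> c in auto)
  next
    case above
    let ?U = "ball (y + (\<epsilon>/2) *\<^sub>R xh) (\<epsilon>/4) \<times> {tmin<..<tmin+\<rho>}"
    have "fourier_laplace lebesgue (\<lambda>p. - ?s p) w \<noteq> fourier_laplace lebesgue (\<lambda>p. - ?s p) ?w"
    proof (rule fourier_laplace_ne_if_support_beyond[OF w _ _ B_meas])
      show "- ?s p \<le> Sp - tmin" if "w p \<noteq> 0" for p
        using w_phase[OF that] by simp
      show "\<bar>- ?s p\<bar> \<le> \<bar>tmin\<bar> + \<bar>\<eta>\<bar> + \<bar>xh \<bullet> y\<bar> + \<epsilon>" if "p \<in> ?B" for p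
        using B_phase[OF that] by simp
      show "open ?U" "(y + (\<epsilon>/2) *\<^sub>R xh, tmin + \<rho>/2) \<in> ?U"
        using \<rho> \<epsilon> by (auto simp: open_Times)
      show "?U \<subseteq> ?B"
        by (rule shifted_box_subset_ball_Times[OF xh]) (use \<rho> \<epsilon> in auto)
      show "Sp - tmin + \<epsilon>/8 \<le> - ?s p" if "p \<in> ?U" for p
        using plane_wave_phase_on_shifted_box[OF xh that] above \<rho> by auto
    qed (use \<epsilon> c in auto)
    then show ?thesis
      by (auto simp: fourier_laplace_uminus)
  qed
qed

lemma not_in_range_L_outside_strip:
  fixes D :: "(real^3) set" and xh y :: "real^3"
  assumes D: "open D" "bounded D" and xh: "norm xh = 1" and \<eta>: "tmin < \<eta>" and K: "0 < K"
    and \<epsilon>: "0 < \<epsilon>" and y: "y \<notin> strip_K_eta D tmax \<eta> xh"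
  shows "\<not> in_range_L D tmin tmax K xh (phi_test tmin xh y \<eta> \<epsilon>)"
proof
  assume "in_range_L D tmin tmax K xh (phi_test tmin xh y \<eta> \<epsilon>)"
  then obtain u where u: "L2_on (D \<times> {tmin<..<tmax}) u"
    and ae: "AE \<tau> in lebesgue. \<tau> \<in> {0..K} \<longrightarrow> phi_test tmin xh y \<eta> \<epsilon> \<tau> = L_op D tmin tmax xh u \<tau>"
    unfolding in_range_L_def by blast
  define A where "A = D \<times> {tmin<..<tmax}"
  define w where "w p = indicator A p *\<^sub>R u p" for p
  define c where "c = 1 / ((\<eta> - tmin) * measure lebesgue (ball y \<epsilon>))"
  define B where "B = ball y \<epsilon> \<times> {tmin..\<eta>}"
  have A: "bounded A" "A \<in> lmeasurable"
    using D by (auto simp: A_def bounded_Times open_Times intro!: lmeasurable_open)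
  have w: "integrable lebesgue w"
    unfolding w_def using L2_on_imp_integrable u A(2) by (simp add: A_def)
  have w_supp: "w p \<noteq> 0 \<Longrightarrow> p \<in> A" for p
    by (auto simp: w_def indicator_def split: if_splits)
  have "0 < measure lebesgue (ball y \<epsilon>)"
    using emeasure_lebesgue_open_pos[of "ball y \<epsilon>" y] \<epsilon> lmeasurable_ball[of y \<epsilon>]
    by (simp add: measure_def enn2real_positive_iff fmeasurable_def)
  then have c: "0 < c" using \<eta> by (simp add: c_def)
  have "fourier_laplace lebesgue (plane_wave_phase xh) w =
        fourier_laplace lebesgue (plane_wave_phase xh) (\<lambda>p. of_real (c * indicator B p))"
  proof (rule entire_eq_if_AE_eq_on_interval[OF _ _ K])
    show "fourier_laplace lebesgue (plane_wave_phase xh) w holomorphic_on UNIV"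
      by (rule holomorphic_fourier_laplace_plane_wave[OF w w_supp A(1)])
    have "integrable lebesgue (\<lambda>p. of_real (c * indicator B p) :: complex)"
      using ball_Times_Icc_lmeasurable[of y \<epsilon> tmin \<eta>]
      by (intro integrable_of_real integrable_mult_right integrable_real_indicator)
        (auto simp: B_def fmeasurable_def)
    then show "fourier_laplace lebesgue (plane_wave_phase xh) (\<lambda>p. of_real (c * indicator B p)) holomorphic_on UNIV"
      by (rule holomorphic_fourier_laplace_plane_wave[where A = B])
        (auto simp: B_def bounded_Times indicator_def split: if_splits)
    show "AE \<tau> in lebesgue. \<tau> \<in> {0..K} \<longrightarrow> fourier_laplace lebesgue (plane_wave_phase xh) w (of_real \<tau>)
        = fourier_laplace lebesgue (plane_wave_phase xh) (\<lambda>p. of_real (c * indicator B p)) (of_real \<tau>)"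
      using ae unfolding L_op_eq_fourier_laplace phi_test_eq_fourier_laplace w_def[abs_def] A_def B_def c_def
      by eventually_elim metis
  qed
  then show False
    using fourier_laplace_ne_outside_strip[OF w w_supp[unfolded A_def] D(2) xh \<eta> \<epsilon> c y]
    by (simp add: B_def)
qed

lemma strip_K_hyperplane_meets_domain:
  fixes D :: "(real^3) set"
  assumes D: "connected D" "bounded D" "D \<noteq> {}" and y: "y \<in> strip_K D xh"
  obtains z where "z \<in> D" "xh \<bullet> z = xh \<bullet> y"
proof -
  let ?img = "(\<lambda>z. xh \<bullet> z) ` D"
  have bdd: "bounded ?img"
    using D(2) by (intro bounded_linear_image bounded_linear_inner_right)
  have "is_interval ?img"
    unfolding is_interval_connected_1 by (intro connected_continuous_image continuous_intros D(1))
  moreover obtain a where "a \<in> ?img" "a < xh \<bullet> y"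
    using y D(3) bdd by (auto simp: strip_K_def cInf_less_iff bounded_imp_bdd_below)
  moreover obtain b where "b \<in> ?img" "xh \<bullet> y < b"
    using y D(3) bdd by (auto simp: strip_K_def less_cSup_iff bounded_imp_bdd_above)
  ultimately have "xh \<bullet> y \<in> ?img"
    by (meson less_imp_le mem_is_interval_1_I)
  then show ?thesis using that by auto
qed

lemma phi_test_in_range_L:
  fixes D :: "(real^3) set" and xh y z :: "real^3"
  assumes D: "open D" and z: "ball z \<epsilon> \<subseteq> D" "xh \<bullet> z = xh \<bullet> y" and \<eta>: "\<eta> \<le> tmax"
  shows "in_range_L D tmin tmax K xh (phi_test tmin xh y \<eta> \<epsilon>)"
proof -
  define c where "c = 1 / ((\<eta> - tmin) * measure lebesgue (ball y \<epsilon>))"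
  define E where "E = ball z \<epsilon> \<times> {tmin<..<\<eta>}"
  have E: "E \<in> lmeasurable" "E \<subseteq> D \<times> {tmin<..<tmax}"
    using z \<eta> by (auto simp: E_def bounded_Times open_Times intro!: lmeasurable_open)
  have "phi_test tmin xh y \<eta> \<epsilon> \<tau> = L_op D tmin tmax xh (\<lambda>p. of_real c * indicator E p) \<tau>" for \<tau>
  proof -
    have "phi_test tmin xh y \<eta> \<epsilon> \<tau> =
          fourier_laplace lebesgue (plane_wave_phase xh) (\<lambda>p. of_real (c * indicator (ball y \<epsilon> \<times> {tmin..\<eta>}) p)) (of_real \<tau>)"
      unfolding c_def by (rule phi_test_eq_fourier_laplace)
    also have "\<dots> = fourier_laplace lebesgue (plane_wave_phase xh) (\<lambda>p. of_real (c * indicator (ball z \<epsilon> \<times> {tmin..\<eta>}) p)) (of_real \<tau>)"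
      by (subst fourier_laplace_indicator_translate[OF z(2)[symmetric]]) simp_all
    also have "\<dots> = fourier_laplace lebesgue (plane_wave_phase xh) (\<lambda>p. of_real (c * indicator E p)) (of_real \<tau>)"
      unfolding E_def by (subst fourier_laplace_indicator_Icc_eq_Ioo) simp_all
    also have "\<dots> = L_op D tmin tmax xh (\<lambda>p. of_real c * indicator E p) \<tau>"
      unfolding L_op_eq_fourier_laplace using E(2)
      by (intro arg_cong2[where f = "fourier_laplace lebesgue _"] ext) (auto simp: indicator_def)
    finally show ?thesis .
  qed
  moreover have "L2_on (D \<times> {tmin<..<tmax}) (\<lambda>p. of_real c * indicator E p)"
    using D E by (intro L2_on_scaled_indicator sets_completionI_sets) (auto simp: open_Times borel_open)
  ultimately show ?thesis
    unfolding in_range_L_def by blast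
qed

theorem lemma3p4:
  fixes D :: "(real^3) set" and tmin tmax kmin kmax K c0 :: real
    and S :: "real^3 \<Rightarrow> real \<Rightarrow> real" and xh :: "real^3"
  assumes D: "lipschitz_domain D" "bounded D" "connected (- closure D)"
    and t: "0 \<le> tmin" "tmin < tmax"
    and S_meas: "\<forall>t\<in>{tmin..tmax}. set_borel_measurable lebesgue D (\<lambda>x. S x t)"
    and S_bdd: "\<forall>t\<in>{tmin..tmax}. \<exists>M. AE x in lebesgue. x \<in> D \<longrightarrow> \<bar>S x t\<bar> \<le> M"
    and S_cont: "\<forall>t\<in>{tmin..tmax}. \<forall>e>0. \<exists>\<delta>>0. \<forall>s\<in>{tmin..tmax}. \<bar>s - t\<bar> < \<delta> \<longrightarrow>
                   (AE x in lebesgue. x \<in> D \<longrightarrow> \<bar>S x s - S x t\<bar> \<le> e)"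
    and S_pos: "c0 > 0" "\<forall>t\<in>{tmin..tmax}. AE x in lebesgue. x \<in> D \<longrightarrow> S x t \<ge> c0"
    and k: "0 \<le> kmin" "kmin < kmax" "K = (kmax - kmin) / 2"
    and xh: "norm xh = 1"
  shows "(\<forall>y\<in>strip_K D xh. \<exists>\<epsilon>0>0. \<forall>\<epsilon>\<in>{0<..<\<epsilon>0}. \<forall>\<eta>\<in>{tmin<..tmax}.
            in_range_L D tmin tmax K xh (phi_test tmin xh y \<eta> \<epsilon>))
       \<and> (\<forall>\<eta>\<in>{tmin<..tmax}. \<forall>y. y \<notin> closure (strip_K_eta D tmax \<eta> xh) \<longrightarrow>
            (\<forall>\<epsilon>>0. \<not> in_range_L D tmin tmax K xh (phi_test tmin xh y \<eta> \<epsilon>)))"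
proof (intro conjI ballI allI impI)
  have D_open: "open D" "connected D" "D \<noteq> {}"
    using D(1) by (auto simp: lipschitz_domain_def)
  fix y assume "y \<in> strip_K D xh"
  then obtain z where z: "z \<in> D" "xh \<bullet> z = xh \<bullet> y"
    using strip_K_hyperplane_meets_domain D_open(2) D(2) D_open(3) by blast
  then obtain \<epsilon>0 where \<epsilon>0: "\<epsilon>0 > 0" "ball z \<epsilon>0 \<subseteq> D"
    using D_open(1) openE by blast
  have "in_range_L D tmin tmax K xh (phi_test tmin xh y \<eta> \<epsilon>)"
    if "\<epsilon> \<in> {0<..<\<epsilon>0}" "\<eta> \<in> {tmin<..tmax}" for \<epsilon> \<eta>
    using that \<epsilon>0(2) by (intro phi_test_in_range_L[OF D_open(1) _ z(2)]) auto
  then show "\<exists>\<epsilon>0>0. \<forall>\<epsilon>\<in>{0<..<\<epsilon>0}. \<forall>\<eta>\<in>{tmin<..tmax}. in_range_L D tmin tmax K xh (phi_test tmin xh y \<eta> \<epsilon>)"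
    using \<epsilon>0(1) by blast
next
  fix \<eta> y and \<epsilon> :: real
  assume \<eta>: "\<eta> \<in> {tmin<..tmax}" and y: "y \<notin> closure (strip_K_eta D tmax \<eta> xh)" and \<epsilon>: "0 < \<epsilon>"
  have "open D" using D(1) by (simp add: lipschitz_domain_def)
  moreover have "0 < K" using k by simp
  moreover have "y \<notin> strip_K_eta D tmax \<eta> xh" using y closure_subset by blast
  ultimately show "\<not> in_range_L D tmin tmax K xh (phi_test tmin xh y \<eta> \<epsilon>)"
    using not_in_range_L_outside_strip[OF _ D(2) xh _ _ \<epsilon>] \<eta> by simp
qed

end
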